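(* Let $n \geq 3$ and for $b > 1$ define $$M_n(b) = \int^{1}_{-1} du\int^{\infty}_{b} \frac{\log\left(\frac{(v^2-1)(u^2-b^2)}{(v^2-b^2)(u^2-1)}\right)}{(v-u)^{n}}\,dv.$$ Then for all $b \in (1,2]$, $$(b-1)^{n-2}M_n(b) \geq \frac{P_{n-3}(1)+\left(1-\frac{1}{3^{n-2}}\right)\left(P_{n-2}(1)+\log\left(3/4\right)\right)}{(n-1)(n-2)}.$$
   Context: For $k \geq 1$, $P_k(1) = 1+\frac12+\cdots+\frac1k$ (the $k$-th harmonic number), and $P_0(1)=0$. *)

theory Defs
  imports "HOL-Analysis.Analysis"
begin

definition Mint :: "nat \<Rightarrow> real \<Rightarrow> real \<Rightarrow> real \<Rightarrow> real" where
  "Mint n b u v = ln (((v\<^sup>2 - 1) * (u\<^sup>2 - b\<^sup>2)) / ((v\<^sup>2 - b\<^sup>2) * (u\<^sup>2 - 1))) / (v - u) ^ n"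

definition M :: "nat \<Rightarrow> real \<Rightarrow> real" where
  "M n b = (LBINT u=ereal (-1)..ereal 1. (LBINT v=ereal b..\<infinity>. Mint n b u v))"

end

(* For -1 < u < 1 < b < v the logarithm in the integrand of M_n(b) splits into
   ln((v-1)/(v-b)) + ln((b-u)/(1-u)) + ln((v+1)(b+u)/((v+b)(1+u))), three nonnegative terms.
   The mixed third term gives a finite contribution, which is dropped. In the other two, the
   power (v-u)^-n is integrated exactly in the variable the logarithm does not depend on, and with
   m = n - 2 the substitution t = (b-1)/(v-1), resp. t = (b-1)/(b-u), leaves integrals of
   t^(m-1) (-ln(1-t)), whose primitive G_m tends to H_m/m at t = 1. Discarding the (v+1)-part of
   the first term this gives, with q = (b-1)/(b+1),
     (b-1)^m M_n(b) >= (2 H_m/m - q^(m-1) - G_m(q)) / (m+1).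
   For b <= 2 we have q <= 1/3, and monotonicity of G_m reduces the theorem to an elementary
   estimate at q = 1/3. *)

theory Submission
  imports Defs "HOL-Real_Asymp.Real_Asymp"
begin

section \<open>A primitive of \<open>x\<^sup>j\<^sup>-\<^sup>1 (- ln (1 - x))\<close>\<close>

text \<open>For \<open>t < 1\<close>, \<open>log_primitive j t = \<integral>\<^sub>0\<^sup>t x\<^sup>j\<^sup>-\<^sup>1 (- ln (1 - x)) dx\<close>; its value \<open>harm j / j\<close>
  at \<open>t = 1\<close> is where the harmonic numbers of the theorem come from.\<close>
definition log_primitive :: "nat \<Rightarrow> real \<Rightarrow> real" where
  "log_primitive j t = ((t ^ j - 1) * - ln (1 - t) + (\<Sum>i<j. t ^ Suc i / Suc i)) / j"

lemma log_primitive_0 [simp]: "log_primitive j 0 = 0"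
  by (simp add: log_primitive_def)

lemma has_real_derivative_log_primitive:
  assumes "j \<ge> 1" "t < 1"
  shows "(log_primitive j has_real_derivative t ^ (j - 1) * - ln (1 - t)) (at t)"
proof -
  have sum: "((\<lambda>t. \<Sum>i<j. t ^ Suc i / Suc i) has_real_derivative (\<Sum>i<j. t ^ i)) (at t)"
  proof (rule DERIV_sum)
    fix i
    show "((\<lambda>t. t ^ Suc i / Suc i) has_real_derivative t ^ i) (at t)"
      using DERIV_cdivide[OF DERIV_pow[of "Suc i" t], of "Suc i"] by (simp del: of_nat_Suc)
  qed
  have prod: "((\<lambda>t. (t ^ j - 1) * - ln (1 - t)) has_real_derivative
      j * t ^ (j - 1) * - ln (1 - t) + (t ^ j - 1) / (1 - t)) (at t)"
    using assms by (auto intro!: derivative_eq_intros simp: field_simps)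
  have "(j * t ^ (j - 1) * - ln (1 - t) + (t ^ j - 1) / (1 - t) + (\<Sum>i<j. t ^ i)) / j
      = (j * (t ^ (j - 1) * - ln (1 - t)) + ((t ^ j - 1) / (1 - t) + (\<Sum>i<j. t ^ i))) / j"
    by (simp only: add.assoc mult.assoc)
  also have "(t ^ j - 1) / (1 - t) + (\<Sum>i<j. t ^ i) = 0"
    using one_diff_power_eq[of t j] assms by (simp add: field_simps)
  finally have "(j * t ^ (j - 1) * - ln (1 - t) + (t ^ j - 1) / (1 - t) + (\<Sum>i<j. t ^ i)) / j
      = t ^ (j - 1) * - ln (1 - t)"
    using assms by simp
  with DERIV_cdivide[OF DERIV_add[OF prod sum], of j] show ?thesis
    unfolding log_primitive_def[abs_def] by simp
qed

lemma isCont_log_primitive: "j \<ge> 1 \<Longrightarrow> t < 1 \<Longrightarrow> isCont (log_primitive j) t"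
  using has_real_derivative_log_primitive DERIV_isCont by blast

lemma log_primitive_mono:
  assumes "j \<ge> 1" "0 \<le> s" "s \<le> t" "t < 1"
  shows "log_primitive j s \<le> log_primitive j t"
proof (rule DERIV_nonneg_imp_nondecreasing[OF \<open>s \<le> t\<close>])
  fix x assume "s \<le> x" "x \<le> t"
  with assms show "\<exists>y. (log_primitive j has_real_derivative y) (at x) \<and> 0 \<le> y"
    by (intro exI[of _ "x ^ (j - 1) * - ln (1 - x)"] conjI mult_nonneg_nonneg
        has_real_derivative_log_primitive) auto
qed

lemma log_primitive_tendsto_1:
  assumes "j \<ge> 1"
  shows "(log_primitive j \<longlongrightarrow> harm j / j) (at_left 1)"
proof -
  have eq: "log_primitive j t
      = ((\<Sum>i<j. t ^ i) * ((1 - t) * ln (1 - t)) + (\<Sum>i<j. t ^ Suc i / Suc i)) / j" for t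
  proof -
    have "(t ^ j - 1) * - ln (1 - t) = (1 - t ^ j) * ln (1 - t)"
      by (simp add: algebra_simps)
    also have "\<dots> = (\<Sum>i<j. t ^ i) * ((1 - t) * ln (1 - t))"
      by (simp only: one_diff_power_eq mult_ac)
    finally show ?thesis
      by (simp add: log_primitive_def)
  qed
  have "((\<lambda>t::real. (1 - t) * ln (1 - t)) \<longlongrightarrow> 0) (at_left 1)"
    by real_asymp
  then have "((\<lambda>t. ((\<Sum>i<j. t ^ i) * ((1 - t) * ln (1 - t)) + (\<Sum>i<j. t ^ Suc i / Suc i)) / j)
      \<longlongrightarrow> ((\<Sum>i<j. 1 ^ i) * 0 + (\<Sum>i<j. 1 ^ Suc i / Suc i)) / j) (at_left 1)"
    using assms by (intro tendsto_intros) auto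
  then show ?thesis
    unfolding eq[abs_def] by (simp add: harm_altdef divide_inverse)
qed

text \<open>The substitution \<open>t = s / w\<close> turns both logarithmic one-dimensional integrals below into
  integrals of the derivative of \<open>log_primitive\<close>.\<close>
lemma has_real_derivative_log_primitive_ratio:
  assumes "j \<ge> 1" "0 < s" "s < w x" "(w has_real_derivative w') (at x)"
  shows "((\<lambda>x. log_primitive j (s / w x)) has_real_derivative
           - w' * s ^ j * ln (w x / (w x - s)) / w x ^ (j + 1)) (at x)"
proof -
  have t: "s / w x < 1" and w: "0 < w x" using assms by auto
  have "((\<lambda>x. s / w x) has_real_derivative - s * w' / (w x)\<^sup>2) (at x)"
    using assms(4) w by (auto intro!: derivative_eq_intros simp: power2_eq_square)
  then have "((\<lambda>x. log_primitive j (s / w x)) has_real_derivative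
      (s / w x) ^ (j - 1) * - ln (1 - s / w x) * (- s * w' / (w x)\<^sup>2)) (at x)"
    by (rule DERIV_chain2[where f = "log_primitive j" and g = "\<lambda>x. s / w x",
          OF has_real_derivative_log_primitive[OF assms(1) t]])
  moreover have "(s / w x) ^ (j - 1) * - ln (1 - s / w x) * (- s * w' / (w x)\<^sup>2)
      = - w' * s ^ j * ln (w x / (w x - s)) / w x ^ (j + 1)"
  proof -
    have "- ln (1 - s / w x) = ln (w x / (w x - s))"
      using assms w by (simp add: ln_div field_simps)
    moreover have "s ^ (j - 1) * s = s ^ j" "w x ^ (j - 1) * (w x)\<^sup>2 = w x ^ (j + 1)"
      using assms(1) by (cases j; simp add: power2_eq_square)+
    ultimately show ?thesis
      using w by (simp add: power_divide field_simps)
  qed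
  ultimately show ?thesis by simp
qed

lemma log_primitive_ratio_tendsto:
  assumes "j \<ge> 1" "0 < s" "(w \<longlongrightarrow> s) F" "eventually (\<lambda>x. s < w x) F"
  shows "((\<lambda>x. log_primitive j (s / w x)) \<longlongrightarrow> harm j / j) F"
proof -
  have "filterlim (\<lambda>x. s / w x) (at_left 1) F"
  proof (rule tendsto_imp_filterlim_at_left)
    show "((\<lambda>x. s / w x) \<longlongrightarrow> 1) F"
      using tendsto_divide[OF tendsto_const assms(3), of s] assms(2) by simp
    show "eventually (\<lambda>x. s / w x < 1) F"
      using assms(4) by eventually_elim (use assms(2) in simp)
  qed
  then show ?thesis
    by (rule filterlim_compose[OF log_primitive_tendsto_1[OF assms(1)]])
qed

section \<open>One-dimensional integrals\<close>

lemma nn_integral_einterval_FTC: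
  fixes f F :: "real \<Rightarrow> real" and a b :: ereal
  assumes "a < b"
    and "\<And>x. x \<in> einterval a b \<Longrightarrow> (F has_real_derivative f x) (at x)"
    and "\<And>x. x \<in> einterval a b \<Longrightarrow> isCont f x"
    and "\<And>x. x \<in> einterval a b \<Longrightarrow> 0 \<le> f x"
    and "((F \<circ> real_of_ereal) \<longlongrightarrow> A) (at_right a)"
    and "((F \<circ> real_of_ereal) \<longlongrightarrow> B) (at_left b)"
  shows "(\<integral>\<^sup>+x\<in>einterval a b. ennreal (f x) \<partial>lborel) = ennreal (B - A)"
proof -
  have "set_integrable lborel (einterval a b) f" "(LBINT x=a..b. f x) = B - A"
    using interval_integral_FTC_nonneg[of a b F f A B] assms by (auto simp: einterval_iff)
  then have "(f has_integral B - A) (einterval a b)"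
    using assms(1) interval_integral_eq_integral' set_borel_integral_eq_integral(1)
    by (metis has_integral_integral less_imp_le)
  then show ?thesis
    using assms(4) by (rule nn_integral_has_integral_lebesgue'[rotated])
qed

lemma has_real_derivative_inverse_power:
  assumes "(f has_real_derivative f') (at x)" "f x \<noteq> 0"
  shows "((\<lambda>x. 1 / f x ^ (j + 1) / (j + 1)) has_real_derivative - f' / f x ^ (j + 2)) (at x)"
proof -
  have "((\<lambda>x. f x ^ (j + 1)) has_real_derivative (j + 1) * (f' * f x ^ j)) (at x)"
    using DERIV_power[OF assms(1), of "j + 1"] by simp
  then have "((\<lambda>x. inverse (f x ^ (j + 1))) has_real_derivative
      - ((j + 1) * (f' * f x ^ j) * inverse ((f x ^ (j + 1)) ^ Suc (Suc 0)))) (at x)"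
    by (rule DERIV_inverse_fun) (use assms(2) in simp)
  then have "((\<lambda>x. inverse (f x ^ (j + 1)) / (j + 1)) has_real_derivative
      - ((j + 1) * (f' * f x ^ j) * inverse ((f x ^ (j + 1)) ^ Suc (Suc 0))) / (j + 1)) (at x)"
    by (rule DERIV_cdivide)
  moreover have "(f x ^ (j + 1)) ^ Suc (Suc 0) = f x ^ j * f x ^ (j + 2)"
    by (simp add: power_add)
  then have "- ((j + 1) * (f' * f x ^ j) * inverse ((f x ^ (j + 1)) ^ Suc (Suc 0))) / (j + 1)
      = - f' / f x ^ (j + 2)"
    using assms(2) by (simp add: field_simps del: of_nat_add of_nat_Suc)
  ultimately show ?thesis
    by (simp only: inverse_eq_divide)
qed

lemma set_nn_integral_lborel_cmult:
  fixes f :: "real \<Rightarrow> real"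
  assumes "0 \<le> c" and [measurable]: "f \<in> borel_measurable borel" "A \<in> sets borel"
  shows "(\<integral>\<^sup>+x\<in>A. ennreal (c * f x) \<partial>lborel) = ennreal c * (\<integral>\<^sup>+x\<in>A. ennreal (f x) \<partial>lborel)"
proof -
  have "(\<integral>\<^sup>+x\<in>A. ennreal (c * f x) \<partial>lborel) = (\<integral>\<^sup>+x. ennreal c * (ennreal (f x) * indicator A x) \<partial>lborel)"
    using assms(1) by (simp add: ennreal_mult' mult.assoc)
  also have "\<dots> = ennreal c * (\<integral>\<^sup>+x\<in>A. ennreal (f x) \<partial>lborel)"
    by (intro nn_integral_cmult) measurable
  finally show ?thesis .
qed

lemma le_enn2real:
  assumes "ennreal x \<le> a" "a < \<infinity>"
  shows "x \<le> enn2real a"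
proof (cases "x \<le> 0")
  case False
  then have "enn2real (ennreal x) \<le> enn2real a"
    using assms by (intro enn2real_mono) auto
  with False show ?thesis by simp
qed (simp add: order_trans[OF _ enn2real_nonneg])

lemma nn_integral_Ioi_inverse_power:
  fixes u b :: real
  assumes "u < b"
  shows "(\<integral>\<^sup>+v\<in>{b<..}. ennreal (1 / (v - u) ^ (j + 2)) \<partial>lborel)
       = ennreal (1 / (b - u) ^ (j + 1) / (j + 1))"
proof -
  have "(\<integral>\<^sup>+v\<in>einterval b \<infinity>. ennreal (1 / (v - u) ^ (j + 2)) \<partial>lborel)
      = ennreal (0 - - (1 / (b - u) ^ (j + 1) / (j + 1)))"
  proof (rule nn_integral_einterval_FTC[where F = "\<lambda>v. - (1 / (v - u) ^ (j + 1) / (j + 1))"])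
    fix v assume "v \<in> einterval b \<infinity>"
    then have "v - u \<noteq> 0" using assms by (simp add: einterval_iff)
    then have "((\<lambda>v. 1 / (v - u) ^ (j + 1) / (j + 1)) has_real_derivative - 1 / (v - u) ^ (j + 2)) (at v)"
      by (intro has_real_derivative_inverse_power) (auto intro!: derivative_eq_intros)
    then show "((\<lambda>v. - (1 / (v - u) ^ (j + 1) / (j + 1))) has_real_derivative 1 / (v - u) ^ (j + 2)) (at v)"
      using DERIV_minus by fastforce
  next
    have "filterlim (\<lambda>v. v - u) at_top at_top"
      by real_asymp
    then have "filterlim (\<lambda>v. (v - u) ^ (j + 1)) at_top at_top"
      by (intro filterlim_pow_at_top) simp_all
    then have lim: "((\<lambda>v. 1 / (v - u) ^ (j + 1)) \<longlongrightarrow> 0) at_top"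
      by (intro tendsto_divide_0[OF tendsto_const] filterlim_at_top_imp_at_infinity)
    show "(((\<lambda>v. - (1 / (v - u) ^ (j + 1) / (j + 1))) \<circ> real_of_ereal) \<longlongrightarrow> 0) (at_left \<infinity>)"
      unfolding ereal_tendsto_simps1
      using tendsto_minus[OF tendsto_divide_zero[where c = "real (j + 1)", OF lim]] by simp
  qed (use assms in \<open>auto simp: ereal_tendsto_simps1 einterval_iff
        intro!: continuous_intros tendsto_eq_intros\<close>)
  then show ?thesis by simp
qed

lemma nn_integral_Ioo_inverse_power:
  fixes c d v :: real
  assumes "c < d" "d < v"
  shows "(\<integral>\<^sup>+u\<in>{c<..<d}. ennreal (1 / (v - u) ^ (j + 2)) \<partial>lborel)
       = ennreal ((1 / (v - d) ^ (j + 1) - 1 / (v - c) ^ (j + 1)) / (j + 1))"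
proof -
  have "(\<integral>\<^sup>+u\<in>einterval c d. ennreal (1 / (v - u) ^ (j + 2)) \<partial>lborel)
      = ennreal (1 / (v - d) ^ (j + 1) / (j + 1) - 1 / (v - c) ^ (j + 1) / (j + 1))"
  proof (rule nn_integral_einterval_FTC[where F = "\<lambda>u. 1 / (v - u) ^ (j + 1) / (j + 1)"])
    fix u assume "u \<in> einterval c d"
    then have "v - u \<noteq> 0" using assms by (simp add: einterval_iff)
    then have "((\<lambda>u. 1 / (v - u) ^ (j + 1) / (j + 1)) has_real_derivative - (- 1) / (v - u) ^ (j + 2)) (at u)"
      by (intro has_real_derivative_inverse_power) (auto intro!: derivative_eq_intros)
    then show "((\<lambda>u. 1 / (v - u) ^ (j + 1) / (j + 1)) has_real_derivative 1 / (v - u) ^ (j + 2)) (at u)"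
      by simp
  qed (use assms in \<open>auto simp: ereal_tendsto_simps1 einterval_iff
        intro!: continuous_intros tendsto_eq_intros\<close>)
  then show ?thesis by (simp add: diff_divide_distrib)
qed

lemma nn_integral_log_v:
  fixes b :: real
  assumes "1 < b" "j \<ge> 1"
  shows "(\<integral>\<^sup>+v\<in>{b<..}. ennreal (ln ((v - 1) / (v - b)) / (v - 1) ^ (j + 1)) \<partial>lborel)
       = ennreal (harm j / (j * (b - 1) ^ j))"
proof -
  define F where "F v = - log_primitive j ((b - 1) / (v - 1)) / (b - 1) ^ j" for v
  have "(\<integral>\<^sup>+v\<in>einterval b \<infinity>. ennreal (ln ((v - 1) / (v - b)) / (v - 1) ^ (j + 1)) \<partial>lborel)
      = ennreal (0 - - (harm j / j) / (b - 1) ^ j)"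
  proof (rule nn_integral_einterval_FTC[where F = F])
    fix v assume "v \<in> einterval b \<infinity>"
    then have v: "b < v" by (simp add: einterval_iff)
    have "((\<lambda>v. log_primitive j ((b - 1) / (v - 1))) has_real_derivative
        - 1 * (b - 1) ^ j * ln ((v - 1) / (v - 1 - (b - 1))) / (v - 1) ^ (j + 1)) (at v)"
      using assms v by (intro has_real_derivative_log_primitive_ratio) (auto intro!: derivative_eq_intros)
    from DERIV_cdivide[OF DERIV_minus[OF this], of "(b - 1) ^ j"]
    show "(F has_real_derivative ln ((v - 1) / (v - b)) / (v - 1) ^ (j + 1)) (at v)"
      using assms unfolding F_def[abs_def] by simp
    show "isCont (\<lambda>v. ln ((v - 1) / (v - b)) / (v - 1) ^ (j + 1)) v"
      using assms v by (auto intro!: continuous_intros)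
    show "0 \<le> ln ((v - 1) / (v - b)) / (v - 1) ^ (j + 1)"
      using assms v by simp
  next
    have "((\<lambda>v. log_primitive j ((b - 1) / (v - 1))) \<longlongrightarrow> harm j / j) (at_right b)"
      using assms eventually_at_right_less[of b]
      by (intro log_primitive_ratio_tendsto) (auto intro!: tendsto_eq_intros elim: eventually_mono)
    then show "((F \<circ> real_of_ereal) \<longlongrightarrow> - (harm j / j) / (b - 1) ^ j) (at_right (ereal b))"
      unfolding ereal_tendsto_simps1 F_def[abs_def] using assms by (intro tendsto_intros) auto
  next
    have "((\<lambda>v. (b - 1) / (v - 1)) \<longlongrightarrow> 0) at_top"
      by real_asymp
    then have "((\<lambda>v. log_primitive j ((b - 1) / (v - 1))) \<longlongrightarrow> log_primitive j 0) at_top"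
      using assms by (intro isCont_tendsto_compose[OF isCont_log_primitive]) auto
    from tendsto_minus[OF tendsto_divide_zero[OF this[unfolded log_primitive_0], of "(b - 1) ^ j"]]
    show "((F \<circ> real_of_ereal) \<longlongrightarrow> 0) (at_left \<infinity>)"
      unfolding ereal_tendsto_simps1 F_def[abs_def] by simp
  qed simp
  then show ?thesis by simp
qed

lemma nn_integral_log_u:
  fixes b :: real
  assumes "1 < b" "j \<ge> 1"
  shows "(\<integral>\<^sup>+u\<in>{-1<..<1}. ennreal (ln ((b - u) / (1 - u)) / (b - u) ^ (j + 1)) \<partial>lborel)
       = ennreal ((harm j / j - log_primitive j ((b - 1) / (b + 1))) / (b - 1) ^ j)"
proof -
  define F where "F u = log_primitive j ((b - 1) / (b - u)) / (b - 1) ^ j" for u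
  have "(\<integral>\<^sup>+u\<in>einterval (ereal (-1)) (ereal 1). ennreal (ln ((b - u) / (1 - u)) / (b - u) ^ (j + 1)) \<partial>lborel)
      = ennreal (harm j / j / (b - 1) ^ j - F (-1))"
  proof (rule nn_integral_einterval_FTC[where F = F])
    fix u assume "u \<in> einterval (ereal (-1)) (ereal 1)"
    then have u: "-1 < u" "u < 1" by (simp_all only: einterval_eq_Icc) simp_all
    have "((\<lambda>u. log_primitive j ((b - 1) / (b - u))) has_real_derivative
        - (- 1) * (b - 1) ^ j * ln ((b - u) / (b - u - (b - 1))) / (b - u) ^ (j + 1)) (at u)"
      using assms u by (intro has_real_derivative_log_primitive_ratio) (auto intro!: derivative_eq_intros)
    from DERIV_cdivide[OF this, of "(b - 1) ^ j"]
    show "(F has_real_derivative ln ((b - u) / (1 - u)) / (b - u) ^ (j + 1)) (at u)"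
      using assms unfolding F_def[abs_def] by simp
    show "isCont (\<lambda>u. ln ((b - u) / (1 - u)) / (b - u) ^ (j + 1)) u"
      using assms u by (auto intro!: continuous_intros)
    show "0 \<le> ln ((b - u) / (1 - u)) / (b - u) ^ (j + 1)"
      using assms u by simp
  next
    have "((\<lambda>u. (b - 1) / (b - u)) \<longlongrightarrow> (b - 1) / (b - -1)) (at_right (-1))"
      using assms by (intro tendsto_intros) auto
    then have "((\<lambda>u. log_primitive j ((b - 1) / (b - u))) \<longlongrightarrow> log_primitive j ((b - 1) / (b + 1)))
        (at_right (-1))"
      using assms by (intro isCont_tendsto_compose[OF isCont_log_primitive]) auto
    from tendsto_divide[OF this tendsto_const, of "(b - 1) ^ j"]
    show "((F \<circ> real_of_ereal) \<longlongrightarrow> F (-1)) (at_right (ereal (-1)))"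
      unfolding ereal_tendsto_simps1 F_def[abs_def] using assms by simp
  next
    have "\<forall>\<^sub>F u in at_left 1. b - 1 < b - u"
      by (simp add: eventually_at_filter)
    then have "((\<lambda>u. log_primitive j ((b - 1) / (b - u))) \<longlongrightarrow> harm j / j) (at_left 1)"
      using assms by (intro log_primitive_ratio_tendsto) (auto intro!: tendsto_eq_intros)
    then show "((F \<circ> real_of_ereal) \<longlongrightarrow> harm j / j / (b - 1) ^ j) (at_left (ereal 1))"
      unfolding ereal_tendsto_simps1 F_def[abs_def] using assms by (intro tendsto_intros) auto
  qed simp
  then show ?thesis
    unfolding einterval_eq_Icc by (simp add: F_def diff_divide_distrib)
qed

lemma nn_integral_log_ratio:
  fixes b :: real
  assumes "1 < b"
  shows "(\<integral>\<^sup>+u\<in>{-1<..<1}. ennreal (ln ((b + u) / (1 + u))) \<partial>lborel)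
       = ennreal ((b + 1) * ln (b + 1) - 2 * ln 2 - (b - 1) * ln (b - 1))"
proof -
  define F where "F u = (b + u) * ln (b + u) - (1 + u) * ln (1 + u)" for u
  have "(\<integral>\<^sup>+u\<in>einterval (ereal (-1)) (ereal 1). ennreal (ln ((b + u) / (1 + u))) \<partial>lborel)
      = ennreal (F 1 - (b - 1) * ln (b - 1))"
  proof (rule nn_integral_einterval_FTC[where F = F])
    fix u assume "u \<in> einterval (ereal (-1)) (ereal 1)"
    then have u: "-1 < u" "u < 1" by (simp_all only: einterval_eq_Icc) simp_all
    have "(F has_real_derivative (ln (b + u) + 1) - (ln (1 + u) + 1)) (at u)"
      unfolding F_def[abs_def] using assms u by (auto intro!: derivative_eq_intros)
    then show "(F has_real_derivative ln ((b + u) / (1 + u))) (at u)"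
      using assms u by (simp add: ln_div)
    show "isCont (\<lambda>u. ln ((b + u) / (1 + u))) u"
      using assms u by (auto intro!: continuous_intros)
    show "0 \<le> ln ((b + u) / (1 + u))"
      using assms u by simp
  next
    have "((\<lambda>x::real. x * ln x) \<longlongrightarrow> 0) (at_right 0)"
      by real_asymp
    moreover have "filterlim (\<lambda>u::real. 1 + u) (at_right 0) (at_right (-1))"
      by (rule filterlim_at_withinI) (auto intro!: tendsto_eq_intros eventually_at_rightI[of "-1" 0])
    ultimately have "((\<lambda>u::real. (1 + u) * ln (1 + u)) \<longlongrightarrow> 0) (at_right (-1))"
      by (rule filterlim_compose)
    moreover have "((\<lambda>u. (b + u) * ln (b + u)) \<longlongrightarrow> (b - 1) * ln (b - 1)) (at_right (-1))"
      using assms by (auto intro!: tendsto_eq_intros)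
    ultimately show "((F \<circ> real_of_ereal) \<longlongrightarrow> (b - 1) * ln (b - 1)) (at_right (ereal (-1)))"
      unfolding ereal_tendsto_simps1 F_def[abs_def] using tendsto_diff by fastforce
  qed (use assms in \<open>auto simp: ereal_tendsto_simps1 F_def[abs_def] intro!: tendsto_eq_intros\<close>)
  then show ?thesis
    unfolding einterval_eq_Icc by (simp add: F_def)
qed

lemma nn_integral_log_v_shifted_power_le:
  fixes b :: real and m :: nat
  assumes "1 < b" "m \<ge> 1"
  shows "(\<integral>\<^sup>+v\<in>{b<..}. ennreal (ln ((v - 1) / (v - b)) / (v + 1) ^ (m + 1)) \<partial>lborel)
       \<le> ennreal (((b - 1) / (b + 1)) ^ (m - 1) / (b - 1) ^ m)"
proof -
  have "ln ((v - 1) / (v - b)) / (v + 1) ^ (m + 1)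
      \<le> 1 / (b + 1) ^ (m - 1) * (ln ((v - 1) / (v - b)) / (v - 1) ^ (1 + 1))" if "b < v" for v
  proof -
    have "(v - 1) ^ 2 * (b + 1) ^ (m - 1) \<le> (v + 1) ^ 2 * (v + 1) ^ (m - 1)"
      using assms that by (intro mult_mono power_mono) auto
    also have "\<dots> = (v + 1) ^ (m + 1)"
      using assms(2) by (simp add: power_add[symmetric])
    finally have "ln ((v - 1) / (v - b)) / (v + 1) ^ (m + 1)
        \<le> ln ((v - 1) / (v - b)) / ((v - 1) ^ 2 * (b + 1) ^ (m - 1))"
      using assms that by (intro divide_left_mono) auto
    then show ?thesis
      by (simp add: mult.commute power2_eq_square)
  qed
  then have "(\<integral>\<^sup>+v\<in>{b<..}. ennreal (ln ((v - 1) / (v - b)) / (v + 1) ^ (m + 1)) \<partial>lborel)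
      \<le> (\<integral>\<^sup>+v\<in>{b<..}. ennreal (1 / (b + 1) ^ (m - 1)
            * (ln ((v - 1) / (v - b)) / (v - 1) ^ (1 + 1))) \<partial>lborel)"
    by (intro nn_integral_mono) (auto simp: indicator_def intro!: ennreal_leI)
  also have "\<dots> = ennreal (1 / (b + 1) ^ (m - 1))
      * (\<integral>\<^sup>+v\<in>{b<..}. ennreal (ln ((v - 1) / (v - b)) / (v - 1) ^ (1 + 1)) \<partial>lborel)"
    using assms by (intro set_nn_integral_lborel_cmult) auto
  also have "\<dots> = ennreal (((b - 1) / (b + 1)) ^ (m - 1) / (b - 1) ^ m)"
    using assms nn_integral_log_v[OF assms(1), of 1]
    by (cases m) (simp_all add: ennreal_mult'[symmetric] harm_expand power_divide)
  finally show ?thesis .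
qed

lemma nn_integral_log_v_split_weight:
  fixes b :: real and m :: nat
  assumes "1 < b" "m \<ge> 1"
  shows "(\<integral>\<^sup>+v\<in>{b<..}. ennreal (ln ((v - 1) / (v - b))
            * (1 / (v - 1) ^ (m + 1) - 1 / (v + 1) ^ (m + 1))) \<partial>lborel)
       + (\<integral>\<^sup>+v\<in>{b<..}. ennreal (ln ((v - 1) / (v - b)) / (v + 1) ^ (m + 1)) \<partial>lborel)
       = ennreal (harm m / (m * (b - 1) ^ m))"
proof -
  have "ennreal (ln ((v - 1) / (v - b)) * (1 / (v - 1) ^ (m + 1) - 1 / (v + 1) ^ (m + 1)))
      + ennreal (ln ((v - 1) / (v - b)) / (v + 1) ^ (m + 1))
      = ennreal (ln ((v - 1) / (v - b)) / (v - 1) ^ (m + 1))" if "b < v" for v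
  proof -
    have "1 / (v + 1) ^ (m + 1) \<le> 1 / (v - 1) ^ (m + 1)"
      using assms that by (intro divide_left_mono power_mono) auto
    then have "ennreal (ln ((v - 1) / (v - b)) * (1 / (v - 1) ^ (m + 1) - 1 / (v + 1) ^ (m + 1)))
        + ennreal (ln ((v - 1) / (v - b)) / (v + 1) ^ (m + 1))
        = ennreal (ln ((v - 1) / (v - b)) * (1 / (v - 1) ^ (m + 1) - 1 / (v + 1) ^ (m + 1))
          + ln ((v - 1) / (v - b)) / (v + 1) ^ (m + 1))"
      using assms that by (intro ennreal_plus[symmetric]) auto
    then show ?thesis
      by (simp add: right_diff_distrib)
  qed
  then have "(\<integral>\<^sup>+v\<in>{b<..}. ennreal (ln ((v - 1) / (v - b))
            * (1 / (v - 1) ^ (m + 1) - 1 / (v + 1) ^ (m + 1))) \<partial>lborel)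
       + (\<integral>\<^sup>+v\<in>{b<..}. ennreal (ln ((v - 1) / (v - b)) / (v + 1) ^ (m + 1)) \<partial>lborel)
      = (\<integral>\<^sup>+v\<in>{b<..}. ennreal (ln ((v - 1) / (v - b)) / (v - 1) ^ (m + 1)) \<partial>lborel)"
    by (subst nn_integral_add[symmetric]) (measurable, auto simp: indicator_def intro!: nn_integral_cong)
  also have "\<dots> = ennreal (harm m / (m * (b - 1) ^ m))"
    using assms by (rule nn_integral_log_v)
  finally show ?thesis .
qed

section \<open>The iterated integral\<close>

lemma Mint_eq_sum_of_logs:
  fixes b u v :: real
  assumes "1 < b" "-1 < u" "u < 1" "b < v"
  shows "Mint n b u v = (ln ((v - 1) / (v - b)) + ln ((b - u) / (1 - u))
           + ln ((v + 1) * (b + u) / ((v + b) * (1 + u)))) / (v - u) ^ n"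
proof -
  have "(v\<^sup>2 - 1) * (u\<^sup>2 - b\<^sup>2) = - ((v - 1) * (b - u) * ((v + 1) * (b + u)))"
    and "(v\<^sup>2 - b\<^sup>2) * (u\<^sup>2 - 1) = - ((v - b) * (1 - u) * ((v + b) * (1 + u)))"
    by (simp_all add: power2_eq_square algebra_simps)
  then have eq: "(v\<^sup>2 - 1) * (u\<^sup>2 - b\<^sup>2) / ((v\<^sup>2 - b\<^sup>2) * (u\<^sup>2 - 1))
      = (v - 1) / (v - b) * ((b - u) / (1 - u)) * ((v + 1) * (b + u) / ((v + b) * (1 + u)))"
    by (simp add: times_divide_times_eq)
  have pos: "0 < (v - 1) / (v - b)" "0 < (b - u) / (1 - u)"
    "0 < (v + 1) * (b + u) / ((v + b) * (1 + u))"
    using assms by auto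
  show ?thesis
    unfolding Mint_def eq ln_mult_pos[OF mult_pos_pos[OF pos(1,2)] pos(3)] ln_mult_pos[OF pos(1,2)] ..
qed

lemma ln_mixed_ratio_bounds:
  fixes b u v :: real
  assumes "1 < b" "-1 < u" "u < 1" "b < v"
  shows "0 \<le> ln ((v + 1) * (b + u) / ((v + b) * (1 + u)))"
    and "ln ((v + 1) * (b + u) / ((v + b) * (1 + u))) \<le> ln ((b + u) / (1 + u))"
proof -
  have "(v + 1) * (b + u) - (v + b) * (1 + u) = (b - 1) * (v - u)"
    by (simp add: algebra_simps)
  then have "(v + b) * (1 + u) \<le> (v + 1) * (b + u)"
    using assms by (smt (verit) mult_pos_pos)
  then show "0 \<le> ln ((v + 1) * (b + u) / ((v + b) * (1 + u)))"
    using assms by simp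
  have "(v + 1) * (b + u) / ((v + b) * (1 + u)) = (v + 1) / (v + b) * ((b + u) / (1 + u))"
    by simp
  also have "\<dots> \<le> (b + u) / (1 + u)"
    using assms by (intro mult_left_le_one_le) auto
  finally show "ln ((v + 1) * (b + u) / ((v + b) * (1 + u))) \<le> ln ((b + u) / (1 + u))"
    using assms by (intro ln_mono) (auto intro!: divide_pos_pos mult_pos_pos)
qed

lemma Mint_nonneg:
  fixes b u v :: real
  assumes "1 < b" "-1 < u" "u < 1" "b < v"
  shows "0 \<le> Mint n b u v"
  using assms ln_mixed_ratio_bounds(1)[OF assms]
  by (simp add: Mint_eq_sum_of_logs[OF assms])

text \<open>The iterated integral defining \<open>M\<close>, taken in the extended nonnegative reals, where
  Tonelli's theorem and additivity need no integrability side conditions.\<close>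
definition nn_iterated_integral :: "real \<Rightarrow> (real \<Rightarrow> real \<Rightarrow> real) \<Rightarrow> ennreal" where
  "nn_iterated_integral b f = (\<integral>\<^sup>+u\<in>{-1<..<1}. (\<integral>\<^sup>+v\<in>{b<..}. ennreal (f u v) \<partial>lborel) \<partial>lborel)"

lemma nn_iterated_integral_mono:
  assumes "\<And>u v. -1 < u \<Longrightarrow> u < 1 \<Longrightarrow> b < v \<Longrightarrow> f u v \<le> g u v"
  shows "nn_iterated_integral b f \<le> nn_iterated_integral b g"
proof -
  have "(\<integral>\<^sup>+v\<in>{b<..}. ennreal (f u v) \<partial>lborel) \<le> (\<integral>\<^sup>+v\<in>{b<..}. ennreal (g u v) \<partial>lborel)"
    if "-1 < u" "u < 1" for u
    using that by (intro nn_integral_mono) (auto simp: indicator_def assms intro!: ennreal_leI)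
  then show ?thesis
    unfolding nn_iterated_integral_def by (intro nn_integral_mono) (auto simp: indicator_def)
qed

lemma nn_iterated_integral_cong:
  assumes "\<And>u v. -1 < u \<Longrightarrow> u < 1 \<Longrightarrow> b < v \<Longrightarrow> f u v = g u v"
  shows "nn_iterated_integral b f = nn_iterated_integral b g"
  using assms by (intro order.antisym nn_iterated_integral_mono) auto

lemma nn_iterated_integral_add:
  assumes [measurable]: "case_prod f \<in> borel_measurable (lborel \<Otimes>\<^sub>M lborel)"
    "case_prod g \<in> borel_measurable (lborel \<Otimes>\<^sub>M lborel)"
    and "\<And>u v. -1 < u \<Longrightarrow> u < 1 \<Longrightarrow> b < v \<Longrightarrow> 0 \<le> f u v"
    and "\<And>u v. -1 < u \<Longrightarrow> u < 1 \<Longrightarrow> b < v \<Longrightarrow> 0 \<le> g u v"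
  shows "nn_iterated_integral b (\<lambda>u v. f u v + g u v)
       = nn_iterated_integral b f + nn_iterated_integral b g"
proof -
  have "(\<integral>\<^sup>+v\<in>{b<..}. ennreal (f u v + g u v) \<partial>lborel)
      = (\<integral>\<^sup>+v\<in>{b<..}. ennreal (f u v) \<partial>lborel) + (\<integral>\<^sup>+v\<in>{b<..}. ennreal (g u v) \<partial>lborel)"
    if "-1 < u" "u < 1" for u
  proof -
    have "(\<integral>\<^sup>+v\<in>{b<..}. ennreal (f u v + g u v) \<partial>lborel)
        = (\<integral>\<^sup>+v. ennreal (f u v) * indicator {b<..} v + ennreal (g u v) * indicator {b<..} v \<partial>lborel)"
      using that assms(3,4) by (intro nn_integral_cong) (auto simp: indicator_def ennreal_plus)
    then show ?thesis
      by (simp add: nn_integral_add)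
  qed
  then have "nn_iterated_integral b (\<lambda>u v. f u v + g u v)
      = (\<integral>\<^sup>+u. (\<integral>\<^sup>+v\<in>{b<..}. ennreal (f u v) \<partial>lborel) * indicator {-1<..<1} u
          + (\<integral>\<^sup>+v\<in>{b<..}. ennreal (g u v) \<partial>lborel) * indicator {-1<..<1} u \<partial>lborel)"
    unfolding nn_iterated_integral_def
    by (intro nn_integral_cong) (auto simp: indicator_def)
  then show ?thesis
    by (simp add: nn_integral_add nn_iterated_integral_def)
qed

lemma nn_iterated_integral_swap:
  assumes [measurable]: "case_prod f \<in> borel_measurable (lborel \<Otimes>\<^sub>M lborel)"
  shows "nn_iterated_integral b f
       = (\<integral>\<^sup>+v\<in>{b<..}. (\<integral>\<^sup>+u\<in>{-1<..<1}. ennreal (f u v) \<partial>lborel) \<partial>lborel)"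
proof -
  have "nn_iterated_integral b f
      = (\<integral>\<^sup>+u. (\<integral>\<^sup>+v. ennreal (f u v) * indicator {b<..} v * indicator {-1<..<1} u \<partial>lborel) \<partial>lborel)"
    unfolding nn_iterated_integral_def
    by (intro nn_integral_cong) (auto simp: indicator_def)
  also have "\<dots> = (\<integral>\<^sup>+v. (\<integral>\<^sup>+u. ennreal (f u v) * indicator {b<..} v * indicator {-1<..<1} u \<partial>lborel) \<partial>lborel)"
    by (rule lborel_pair.Fubini'[symmetric]) measurable
  also have "\<dots> = (\<integral>\<^sup>+v\<in>{b<..}. (\<integral>\<^sup>+u\<in>{-1<..<1}. ennreal (f u v) \<partial>lborel) \<partial>lborel)"
    by (intro nn_integral_cong) (auto simp: indicator_def)
  finally show ?thesis .
qed

text \<open>\<open>M\<close> is a Bochner integral, which is \<open>0\<close> for non-integrable functions: the finiteness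
  hypothesis is what makes it agree with the nonnegative integral.\<close>
lemma M_eq_enn2real_nn_iterated_integral:
  assumes "1 < b" and finite: "nn_iterated_integral b (Mint n b) < \<infinity>"
  shows "M n b = enn2real (nn_iterated_integral b (Mint n b))"
proof -
  define I where "I u = (\<integral>\<^sup>+v\<in>{b<..}. ennreal (Mint n b u v) \<partial>lborel)" for u
  have [measurable]: "I \<in> borel_measurable lborel"
    unfolding I_def[abs_def] Mint_def by measurable
  have inner: "(LINT v:{b<..}|lborel. Mint n b u v) = enn2real (I u)" if "-1 < u" "u < 1" for u
  proof -
    have "(\<lambda>v. indicator {b<..} v *\<^sub>R Mint n b u v) \<in> borel_measurable lborel"
      unfolding Mint_def by measurable
    moreover have "AE v in lborel. 0 \<le> indicator {b<..} v *\<^sub>R Mint n b u v"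
      using Mint_nonneg[OF assms(1) that] by (intro AE_I2) (simp add: indicator_def)
    ultimately have "(LINT v:{b<..}|lborel. Mint n b u v)
        = enn2real (\<integral>\<^sup>+v. ennreal (indicator {b<..} v *\<^sub>R Mint n b u v) \<partial>lborel)"
      unfolding set_lebesgue_integral_def by (rule integral_eq_nn_integral)
    also have "\<dots> = enn2real (I u)"
      unfolding I_def by (intro arg_cong[where f = enn2real] nn_integral_cong) (simp add: indicator_def)
    finally show ?thesis .
  qed
  have "M n b = (LINT u:{-1<..<1}|lborel. (LINT v:{b<..}|lborel. Mint n b u v))"
    unfolding M_def interval_lebesgue_integral_def einterval_eq by simp
  also have "\<dots> = (LINT u:{-1<..<1}|lborel. enn2real (I u))"
    using inner by (intro set_lebesgue_integral_cong) auto
  also have "\<dots> = enn2real (\<integral>\<^sup>+u. ennreal (indicator {-1<..<1} u * enn2real (I u)) \<partial>lborel)"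
    unfolding set_lebesgue_integral_def by (subst integral_eq_nn_integral) auto
  also have "(\<integral>\<^sup>+u. ennreal (indicator {-1<..<1} u * enn2real (I u)) \<partial>lborel)
      = nn_iterated_integral b (Mint n b)"
  proof -
    have "AE u in lborel. I u * indicator {-1<..<1} u \<noteq> \<infinity>"
      using finite unfolding nn_iterated_integral_def I_def[symmetric]
      by (intro nn_integral_PInf_AE) auto
    then show ?thesis
      unfolding nn_iterated_integral_def I_def[symmetric]
      by (intro nn_integral_cong_AE) (auto simp: indicator_def less_top elim!: eventually_mono)
  qed
  finally show ?thesis .
qed

lemma nn_iterated_integral_Mint_split:
  fixes b :: real and m :: nat
  assumes "1 < b"
  shows "nn_iterated_integral b (Mint (m + 2) b)
       = nn_iterated_integral b (\<lambda>u v. ln ((v - 1) / (v - b)) / (v - u) ^ (m + 2))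
       + nn_iterated_integral b (\<lambda>u v. ln ((b - u) / (1 - u)) / (v - u) ^ (m + 2))
       + nn_iterated_integral b (\<lambda>u v. ln ((v + 1) * (b + u) / ((v + b) * (1 + u))) / (v - u) ^ (m + 2))"
proof -
  have "nn_iterated_integral b (Mint (m + 2) b)
      = nn_iterated_integral b (\<lambda>u v. (ln ((v - 1) / (v - b)) / (v - u) ^ (m + 2)
          + ln ((b - u) / (1 - u)) / (v - u) ^ (m + 2))
          + ln ((v + 1) * (b + u) / ((v + b) * (1 + u))) / (v - u) ^ (m + 2))"
    using assms by (intro nn_iterated_integral_cong) (simp add: Mint_eq_sum_of_logs add_divide_distrib)
  also have "\<dots> = nn_iterated_integral b (\<lambda>u v. ln ((v - 1) / (v - b)) / (v - u) ^ (m + 2)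
          + ln ((b - u) / (1 - u)) / (v - u) ^ (m + 2))
      + nn_iterated_integral b (\<lambda>u v. ln ((v + 1) * (b + u) / ((v + b) * (1 + u))) / (v - u) ^ (m + 2))"
    by (rule nn_iterated_integral_add)
      (measurable, measurable, use assms ln_mixed_ratio_bounds(1)[OF assms] in auto)
  also have "nn_iterated_integral b (\<lambda>u v. ln ((v - 1) / (v - b)) / (v - u) ^ (m + 2)
          + ln ((b - u) / (1 - u)) / (v - u) ^ (m + 2))
      = nn_iterated_integral b (\<lambda>u v. ln ((v - 1) / (v - b)) / (v - u) ^ (m + 2))
      + nn_iterated_integral b (\<lambda>u v. ln ((b - u) / (1 - u)) / (v - u) ^ (m + 2))"
    by (rule nn_iterated_integral_add) (measurable, measurable, use assms in auto)
  finally show ?thesis .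
qed

lemma nn_iterated_integral_log_v:
  fixes b :: real and m :: nat
  assumes "1 < b"
  shows "nn_iterated_integral b (\<lambda>u v. ln ((v - 1) / (v - b)) / (v - u) ^ (m + 2))
       = ennreal (1 / (m + 1)) * (\<integral>\<^sup>+v\<in>{b<..}. ennreal (ln ((v - 1) / (v - b))
           * (1 / (v - 1) ^ (m + 1) - 1 / (v + 1) ^ (m + 1))) \<partial>lborel)"
proof -
  have inner: "(\<integral>\<^sup>+u\<in>{-1<..<1}. ennreal (ln ((v - 1) / (v - b)) / (v - u) ^ (m + 2)) \<partial>lborel)
      = ennreal (1 / (m + 1)) * ennreal (ln ((v - 1) / (v - b))
          * (1 / (v - 1) ^ (m + 1) - 1 / (v + 1) ^ (m + 1)))" if "b < v" for v
  proof -
    have L: "0 \<le> ln ((v - 1) / (v - b))"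
      using assms that by simp
    have "(\<integral>\<^sup>+u\<in>{-1<..<1}. ennreal (ln ((v - 1) / (v - b)) * (1 / (v - u) ^ (m + 2))) \<partial>lborel)
        = ennreal (ln ((v - 1) / (v - b))) * (\<integral>\<^sup>+u\<in>{-1<..<1}. ennreal (1 / (v - u) ^ (m + 2)) \<partial>lborel)"
      using L by (rule set_nn_integral_lborel_cmult) auto
    also have "\<dots> = ennreal (ln ((v - 1) / (v - b)))
        * ennreal ((1 / (v - 1) ^ (m + 1) - 1 / (v - -1) ^ (m + 1)) / (m + 1))"
      using assms that by (subst nn_integral_Ioo_inverse_power) auto
    finally show ?thesis
      using L by (simp add: ennreal_mult'[symmetric] field_simps)
  qed
  have "nn_iterated_integral b (\<lambda>u v. ln ((v - 1) / (v - b)) / (v - u) ^ (m + 2))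
      = (\<integral>\<^sup>+v\<in>{b<..}. (\<integral>\<^sup>+u\<in>{-1<..<1}. ennreal (ln ((v - 1) / (v - b)) / (v - u) ^ (m + 2))
          \<partial>lborel) \<partial>lborel)"
    by (rule nn_iterated_integral_swap) measurable
  also have "\<dots> = (\<integral>\<^sup>+v. ennreal (1 / (m + 1)) * (ennreal (ln ((v - 1) / (v - b))
          * (1 / (v - 1) ^ (m + 1) - 1 / (v + 1) ^ (m + 1))) * indicator {b<..} v) \<partial>lborel)"
    using inner by (intro nn_integral_cong) (simp add: indicator_def)
  also have "\<dots> = ennreal (1 / (m + 1)) * (\<integral>\<^sup>+v\<in>{b<..}. ennreal (ln ((v - 1) / (v - b))
           * (1 / (v - 1) ^ (m + 1) - 1 / (v + 1) ^ (m + 1))) \<partial>lborel)"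
    by (rule nn_integral_cmult) measurable
  finally show ?thesis .
qed

lemma nn_iterated_integral_log_v_bounds:
  fixes b :: real and m :: nat
  assumes "1 < b" "m \<ge> 1"
  shows "nn_iterated_integral b (\<lambda>u v. ln ((v - 1) / (v - b)) / (v - u) ^ (m + 2)) < \<infinity>"
    and "ennreal ((harm m / m - ((b - 1) / (b + 1)) ^ (m - 1)) / ((m + 1) * (b - 1) ^ m))
       \<le> nn_iterated_integral b (\<lambda>u v. ln ((v - 1) / (v - b)) / (v - u) ^ (m + 2))"
proof -
  define E where "E = (\<integral>\<^sup>+v\<in>{b<..}. ennreal (ln ((v - 1) / (v - b))
      * (1 / (v - 1) ^ (m + 1) - 1 / (v + 1) ^ (m + 1))) \<partial>lborel)"
  define E' where "E' = (\<integral>\<^sup>+v\<in>{b<..}. ennreal (ln ((v - 1) / (v - b)) / (v + 1) ^ (m + 1)) \<partial>lborel)"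
  define c where "c = ((b - 1) / (b + 1)) ^ (m - 1) / (b - 1) ^ m"
  have sum: "E + E' = ennreal (harm m / (m * (b - 1) ^ m))" and E': "E' \<le> ennreal c"
    unfolding E_def E'_def c_def using assms
    by (rule nn_integral_log_v_split_weight, rule nn_integral_log_v_shifted_power_le)
  have iterated: "nn_iterated_integral b (\<lambda>u v. ln ((v - 1) / (v - b)) / (v - u) ^ (m + 2))
      = ennreal (1 / (m + 1)) * E"
    unfolding E_def using assms(1) by (rule nn_iterated_integral_log_v)
  have "E \<le> E + E'"
    by simp
  with sum show "nn_iterated_integral b (\<lambda>u v. ln ((v - 1) / (v - b)) / (v - u) ^ (m + 2)) < \<infinity>"
    unfolding iterated by (simp add: ennreal_mult_less_top order_le_less_trans)
  have "ennreal (harm m / (m * (b - 1) ^ m)) \<le> E + ennreal c"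
    unfolding sum[symmetric] using E' by (rule add_left_mono)
  then have "ennreal (harm m / (m * (b - 1) ^ m)) - ennreal c \<le> E"
    by (simp add: ennreal_minus_le_iff add.commute)
  moreover have "ennreal (harm m / (m * (b - 1) ^ m)) - ennreal c = ennreal ((harm m / m - c * (b - 1) ^ m) / (b - 1) ^ m)"
  proof -
    have "0 \<le> c"
      using assms(1) by (simp add: c_def)
    then show ?thesis
      using assms(1) by (subst ennreal_minus) (simp_all add: diff_divide_distrib)
  qed
  ultimately have "ennreal (1 / (m + 1)) * ennreal ((harm m / m - c * (b - 1) ^ m) / (b - 1) ^ m)
      \<le> ennreal (1 / (m + 1)) * E"
    by (intro mult_left_mono) auto
  then show "ennreal ((harm m / m - ((b - 1) / (b + 1)) ^ (m - 1)) / ((m + 1) * (b - 1) ^ m))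
       \<le> nn_iterated_integral b (\<lambda>u v. ln ((v - 1) / (v - b)) / (v - u) ^ (m + 2))"
    using assms(1) unfolding iterated by (simp add: c_def ennreal_mult'[symmetric])
qed

lemma nn_iterated_integral_inverse_power_v:
  fixes b :: real and m :: nat and g :: "real \<Rightarrow> real"
  assumes "1 < b" and g: "\<And>u. -1 < u \<Longrightarrow> u < 1 \<Longrightarrow> 0 \<le> g u"
  shows "nn_iterated_integral b (\<lambda>u v. g u / (v - u) ^ (m + 2))
       = (\<integral>\<^sup>+u\<in>{-1<..<1}. ennreal (g u / (b - u) ^ (m + 1) / (m + 1)) \<partial>lborel)"
  unfolding nn_iterated_integral_def
proof (intro nn_integral_cong)
  fix u :: real
  show "(\<integral>\<^sup>+v\<in>{b<..}. ennreal (g u / (v - u) ^ (m + 2)) \<partial>lborel) * indicator {-1<..<1} u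
      = ennreal (g u / (b - u) ^ (m + 1) / (m + 1)) * indicator {-1<..<1} u"
  proof (cases "-1 < u \<and> u < 1")
    case True
    have "(\<integral>\<^sup>+v\<in>{b<..}. ennreal (g u * (1 / (v - u) ^ (m + 2))) \<partial>lborel)
        = ennreal (g u) * (\<integral>\<^sup>+v\<in>{b<..}. ennreal (1 / (v - u) ^ (m + 2)) \<partial>lborel)"
      using g True by (intro set_nn_integral_lborel_cmult) auto
    also have "\<dots> = ennreal (g u) * ennreal (1 / (b - u) ^ (m + 1) / (m + 1))"
      using assms True by (subst nn_integral_Ioi_inverse_power) auto
    finally show ?thesis
      using g True by (simp add: ennreal_mult'[symmetric])
  qed simp
qed

lemma nn_iterated_integral_log_u:
  fixes b :: real and m :: nat
  assumes "1 < b" "m \<ge> 1"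
  shows "nn_iterated_integral b (\<lambda>u v. ln ((b - u) / (1 - u)) / (v - u) ^ (m + 2))
       = ennreal ((harm m / m - log_primitive m ((b - 1) / (b + 1))) / ((m + 1) * (b - 1) ^ m))"
proof -
  have "nn_iterated_integral b (\<lambda>u v. ln ((b - u) / (1 - u)) / (v - u) ^ (m + 2))
      = (\<integral>\<^sup>+u\<in>{-1<..<1}. ennreal (1 / (m + 1) * (ln ((b - u) / (1 - u)) / (b - u) ^ (m + 1))) \<partial>lborel)"
    using assms by (subst nn_iterated_integral_inverse_power_v) (auto simp: field_simps)
  also have "\<dots> = ennreal (1 / (m + 1))
      * (\<integral>\<^sup>+u\<in>{-1<..<1}. ennreal (ln ((b - u) / (1 - u)) / (b - u) ^ (m + 1)) \<partial>lborel)"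
    by (rule set_nn_integral_lborel_cmult) auto
  also have "\<dots> = ennreal (1 / (m + 1))
      * ennreal ((harm m / m - log_primitive m ((b - 1) / (b + 1))) / (b - 1) ^ m)"
    using assms by (simp only: nn_integral_log_u)
  finally show ?thesis
    by (simp add: ennreal_mult'[symmetric])
qed

lemma nn_iterated_integral_log_mixed_finite:
  fixes b :: real and m :: nat
  assumes "1 < b"
  shows "nn_iterated_integral b (\<lambda>u v. ln ((v + 1) * (b + u) / ((v + b) * (1 + u))) / (v - u) ^ (m + 2))
       < \<infinity>"
proof -
  have "nn_iterated_integral b (\<lambda>u v. ln ((v + 1) * (b + u) / ((v + b) * (1 + u))) / (v - u) ^ (m + 2))
      \<le> nn_iterated_integral b (\<lambda>u v. ln ((b + u) / (1 + u)) / (v - u) ^ (m + 2))"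
    using assms ln_mixed_ratio_bounds
    by (intro nn_iterated_integral_mono divide_right_mono) auto
  also have "\<dots> = (\<integral>\<^sup>+u\<in>{-1<..<1}. ennreal (ln ((b + u) / (1 + u)) / (b - u) ^ (m + 1) / (m + 1)) \<partial>lborel)"
    using assms by (intro nn_iterated_integral_inverse_power_v) auto
  also have "\<dots> \<le> (\<integral>\<^sup>+u\<in>{-1<..<1}. ennreal (1 / (b - 1) ^ (m + 1) * ln ((b + u) / (1 + u))) \<partial>lborel)"
  proof -
    have "ln ((b + u) / (1 + u)) / (b - u) ^ (m + 1) / (m + 1)
        \<le> 1 / (b - 1) ^ (m + 1) * ln ((b + u) / (1 + u))" if u: "-1 < u" "u < 1" for u
    proof -
      have "(b - 1) ^ (m + 1) \<le> (b - u) ^ (m + 1)"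
        using assms u by (intro power_mono) auto
      also have "\<dots> \<le> (b - u) ^ (m + 1) * (m + 1)"
        using assms u by simp
      finally have "ln ((b + u) / (1 + u)) / ((b - u) ^ (m + 1) * (m + 1))
          \<le> ln ((b + u) / (1 + u)) / (b - 1) ^ (m + 1)"
        using assms u by (intro divide_left_mono) auto
      then show ?thesis
        by simp
    qed
    then show ?thesis
      by (intro nn_integral_mono) (auto simp: indicator_def intro!: ennreal_leI)
  qed
  also have "\<dots> = ennreal (1 / (b - 1) ^ (m + 1)) * (\<integral>\<^sup>+u\<in>{-1<..<1}. ennreal (ln ((b + u) / (1 + u))) \<partial>lborel)"
    using assms by (intro set_nn_integral_lborel_cmult) auto
  also have "\<dots> < \<infinity>"
    using assms by (simp add: nn_integral_log_ratio ennreal_mult_less_top)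
  finally show ?thesis .
qed

lemma M_lower_bound:
  fixes b :: real and m :: nat
  assumes "1 < b" "m \<ge> 1"
  defines "q \<equiv> (b - 1) / (b + 1)"
  shows "(2 * harm m / m - q ^ (m - 1) - log_primitive m q) / ((m + 1) * (b - 1) ^ m) \<le> M (m + 2) b"
proof -
  define IL where "IL = nn_iterated_integral b (\<lambda>u v. ln ((v - 1) / (v - b)) / (v - u) ^ (m + 2))"
  define IU where "IU = nn_iterated_integral b (\<lambda>u v. ln ((b - u) / (1 - u)) / (v - u) ^ (m + 2))"
  define IQ where "IQ = nn_iterated_integral b
    (\<lambda>u v. ln ((v + 1) * (b + u) / ((v + b) * (1 + u))) / (v - u) ^ (m + 2))"
  have IL: "IL < \<infinity>" "ennreal ((harm m / m - q ^ (m - 1)) / ((m + 1) * (b - 1) ^ m)) \<le> IL"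
    unfolding IL_def q_def using nn_iterated_integral_log_v_bounds[OF assms(1,2)] by auto
  have IU: "IU = ennreal ((harm m / m - log_primitive m q) / ((m + 1) * (b - 1) ^ m))"
    unfolding IU_def q_def using assms(1,2) by (rule nn_iterated_integral_log_u)
  have IQ: "IQ < \<infinity>"
    unfolding IQ_def using assms(1) by (rule nn_iterated_integral_log_mixed_finite)
  have split: "nn_iterated_integral b (Mint (m + 2) b) = IL + IU + IQ"
    unfolding IL_def IU_def IQ_def using assms(1) by (rule nn_iterated_integral_Mint_split)
  have "2 * harm m / m - q ^ (m - 1) - log_primitive m q
      = (harm m / m - q ^ (m - 1)) + (harm m / m - log_primitive m q)"
    using add_divide_distrib[of "harm m" "harm m" "real m"] by simp
  then have "(2 * harm m / m - q ^ (m - 1) - log_primitive m q) / ((m + 1) * (b - 1) ^ m)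
      = (harm m / m - q ^ (m - 1)) / ((m + 1) * (b - 1) ^ m)
      + (harm m / m - log_primitive m q) / ((m + 1) * (b - 1) ^ m)"
    by (simp only: add_divide_distrib[symmetric])
  also have "\<dots> \<le> enn2real IL + enn2real IU"
    using IL IU by (intro add_mono le_enn2real) auto
  also have "\<dots> \<le> enn2real (IL + IU + IQ)"
    using IL IU IQ by (simp add: enn2real_plus)
  also have "\<dots> = M (m + 2) b"
  proof -
    have "nn_iterated_integral b (Mint (m + 2) b) < \<infinity>"
      using IL IU IQ unfolding split by simp
    then show ?thesis
      unfolding split[symmetric] by (rule M_eq_enn2real_nn_iterated_integral[OF assms(1), symmetric])
  qed
  finally show ?thesis .
qed

section \<open>The numerical estimate\<close>

lemma sum_third_powers_le:
  assumes "m \<ge> 1"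
  shows "(\<Sum>i<m. (1 / 3 :: real) ^ Suc i / Suc i) \<le> 5 / 12 - (1 / 3) ^ m / 4"
  using assms
proof (induction m rule: dec_induct)
  case (step k)
  have "(1 / 3 :: real) ^ Suc k / Suc k \<le> (1 / 3) ^ Suc k / 2"
    using step.hyps by (intro divide_left_mono) auto
  with step.IH show ?case
    by simp
qed simp

lemma three_mult_square_le_three_power:
  assumes "m \<ge> 3"
  shows "3 * m\<^sup>2 \<le> (3 :: nat) ^ m"
  using assms
proof (induction m rule: dec_induct)
  case (step k)
  have "3 * k \<le> k * k"
    using step.hyps by (intro mult_right_mono) auto
  moreover have "3 * (Suc k)\<^sup>2 = 3 * (k * k) + 6 * k + 3" "3 * (3 * k\<^sup>2) = 9 * (k * k)"
    by (simp_all add: power2_eq_square algebra_simps)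
  ultimately have "3 * (Suc k)\<^sup>2 \<le> 3 * (3 * k\<^sup>2)"
    using step.hyps by linarith
  with step.IH show ?case
    by simp
qed simp

lemma log_primitive_one_third:
  "m * log_primitive m (1 / 3) = (1 - (1 / 3) ^ m) * (ln 2 - ln 3) + (\<Sum>i<m. (1 / 3 :: real) ^ Suc i / Suc i)"
  if "m \<ge> 1"
proof -
  have "m * log_primitive m (1 / 3) = ((1 / 3) ^ m - 1) * - ln (2 / 3) + (\<Sum>i<m. (1 / 3 :: real) ^ Suc i / Suc i)"
    using that by (simp add: log_primitive_def)
  moreover have "ln (2 / 3 :: real) = ln 2 - ln 3"
    by (simp add: ln_div)
  ultimately show ?thesis
    by (simp add: algebra_simps)
qed

lemma mult_log_primitive_le:
  fixes m :: nat and q :: real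
  assumes "m \<ge> 1" "0 \<le> q" "q \<le> 1 / 3"
  shows "m * log_primitive m q \<le> (1 - (1 / 3) ^ m) * (ln 2 - ln 3) + 5 / 12 - (1 / 3) ^ m / 4"
proof -
  have "log_primitive m q \<le> log_primitive m (1 / 3)"
    using assms by (intro log_primitive_mono) auto
  then have "m * log_primitive m q \<le> m * log_primitive m (1 / 3)"
    by (simp add: mult_left_mono)
  also have "\<dots> \<le> (1 - (1 / 3) ^ m) * (ln 2 - ln 3) + 5 / 12 - (1 / 3) ^ m / 4"
    using log_primitive_one_third[OF assms(1)] sum_third_powers_le[OF assms(1)] by simp
  finally show ?thesis .
qed

lemma three_mult_third_power_le:
  assumes "m \<ge> 1"
  shows "3 * (m * (1 / 3 :: real) ^ m) \<le> 1 / m + 1 / 4 - 5 / 12 * (1 / 3) ^ m"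
proof (cases "m \<ge> 3")
  case True
  have "real (3 * m\<^sup>2) \<le> real (3 ^ m)"
    using three_mult_square_le_three_power[OF True] by linarith
  then have "3 * (m * (1 / 3 :: real) ^ m) \<le> 1 / m"
    using True by (simp add: field_simps power2_eq_square power_one_over)
  moreover have "(1 / 3 :: real) ^ m \<le> 1 / 3"
    using assms power_decreasing[of 1 m "1 / 3 :: real"] by simp
  ultimately show ?thesis
    by linarith
next
  case False
  then have "m = 1 \<or> m = 2"
    using assms by auto
  then show ?thesis
    by (auto simp: power2_eq_square)
qed

lemma harmonic_bound_le:
  fixes m :: nat and q :: real
  assumes "m \<ge> 1" "0 \<le> q" "q \<le> 1 / 3"
  shows "(harm (m - 1) + (1 - 1 / 3 ^ m) * (harm m + ln (3 / 4))) / ((real m + 1) * real m)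
       \<le> (2 * harm m / m - q ^ (m - 1) - log_primitive m q) / (real m + 1)"
proof -
  define x :: real where "x = (1 / 3) ^ m"
  define H :: real where "H = harm m"
  have m: "real m > 0" using assms(1) by simp
  have x: "0 < x" "x \<le> 1 / 3"
    using assms(1) power_decreasing[of 1 m "1 / 3 :: real"] by (auto simp: x_def)
  have "q ^ (m - 1) \<le> (1 / 3) ^ (m - 1)"
    using assms by (intro power_mono) auto
  also have "\<dots> = 3 * x"
    using assms(1) by (cases m) (simp_all add: x_def)
  finally have mq: "m * q ^ (m - 1) \<le> 3 * (m * x)"
    using m by simp
  have mG: "m * log_primitive m q \<le> ln 2 - ln 3 - x * ln 2 + x * ln 3 + 5 / 12 - x / 4"
    using mult_log_primitive_le[OF assms] unfolding x_def[symmetric] by (simp add: algebra_simps)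
  have mx: "3 * (m * x) \<le> 1 / m + 1 / 4 - 5 / 12 * x"
    unfolding x_def by (rule three_mult_third_power_le[OF assms(1)])
  have "(1 - x) * (2 / 3) \<le> (1 - x) * ln 2"
    using x ln2_ge_two_thirds by (intro mult_left_mono) auto
  then have ln2: "2 / 3 - 2 / 3 * x \<le> ln 2 - x * ln 2"
    by (simp only: left_diff_distrib mult_1_left mult.commute)
  have xH: "0 \<le> x * H"
    using x by (simp add: H_def harm_nonneg)
  have "harm (m - 1) + (1 - 1 / 3 ^ m) * (harm m + ln (3 / 4))
      = H - 1 / m + H - x * H + ln 3 - x * ln 3 - 2 * ln 2 + 2 * (x * ln 2)"
  proof -
    have harm_pred: "harm (m - 1) = H - 1 / m"
      using assms(1) by (cases m) (simp_all add: H_def harm_Suc divide_inverse)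
    have ln_3_4: "ln (3 / 4 :: real) = ln 3 - 2 * ln 2"
      using ln_realpow[of 2 2] by (simp add: ln_div)
    have x_eq: "1 / 3 ^ m = x"
      by (simp add: x_def power_one_over)
    show ?thesis
      unfolding harm_pred ln_3_4 x_eq H_def[symmetric] by (simp add: algebra_simps)
  qed
  also have "\<dots> \<le> 2 * H - m * q ^ (m - 1) - m * log_primitive m q"
    using mq mG mx ln2 xH by linarith
  also have "\<dots> = m * (2 * harm m / m - q ^ (m - 1) - log_primitive m q)"
    using m by (simp add: H_def field_simps)
  finally have "(harm (m - 1) + (1 - 1 / 3 ^ m) * (harm m + ln (3 / 4))) / m
      \<le> 2 * harm m / m - q ^ (m - 1) - log_primitive m q"
    using m by (simp only: pos_divide_le_eq mult.commute)
  then have "(harm (m - 1) + (1 - 1 / 3 ^ m) * (harm m + ln (3 / 4))) / m / (real m + 1)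
      \<le> (2 * harm m / m - q ^ (m - 1) - log_primitive m q) / (real m + 1)"
    by (rule divide_right_mono) simp
  then show ?thesis
    by (simp only: divide_divide_eq_left mult.commute)
qed

theorem lemma3p1:
  fixes n :: nat and b :: real
  assumes "n \<ge> 3" and "1 < b" and "b \<le> 2"
  shows "(b - 1) ^ (n - 2) * M n b \<ge>
    (harm (n - 3) + (1 - 1 / 3 ^ (n - 2)) * (harm (n - 2) + ln (3 / 4)))
      / ((real n - 1) * (real n - 2))"
proof -
  define m where "m = n - 2"
  have m: "m \<ge> 1" and n: "n = m + 2"
    using assms(1) by (auto simp: m_def)
  define q where "q = (b - 1) / (b + 1)"
  have q: "0 \<le> q" "q \<le> 1 / 3"
    using assms(2,3) by (auto simp: q_def field_simps)
  have "(harm (n - 3) + (1 - 1 / 3 ^ (n - 2)) * (harm (n - 2) + ln (3 / 4))) / ((real n - 1) * (real n - 2))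
      = (harm (m - 1) + (1 - 1 / 3 ^ m) * (harm m + ln (3 / 4))) / ((real m + 1) * real m)"
    by (simp add: n)
  also have "\<dots> \<le> (2 * harm m / m - q ^ (m - 1) - log_primitive m q) / (real m + 1)"
    using m q by (rule harmonic_bound_le)
  also have "\<dots> = (b - 1) ^ m * ((2 * harm m / m - q ^ (m - 1) - log_primitive m q) / ((m + 1) * (b - 1) ^ m))"
    using assms(2) by simp
  also have "\<dots> \<le> (b - 1) ^ m * M n b"
    using M_lower_bound[OF assms(2) m] assms(2) unfolding n q_def by (intro mult_left_mono) auto
  finally show ?thesis
    by (simp add: m_def)
qed

end
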